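(* Let $x_1^*,\dots,x_n^*$ satisfy $0\le x_i^*\le q_i$ for each $i$ and $x_1^*\le x_2^*\le\cdots\le x_n^*$. Then there exists a function $f$ such that $(f,x_1^*,\dots,x_n^* )$ is a feasible solution of the reward-design problem if and only if \[C\left(\frac{x_n^*}{q_n}+\sum_{i=1}^{n-1}\left((n-i)\left(\frac{1}{q_i}-\frac{1}{q_{i+1}}\right)+\frac{1}{q_i}\right)x_i^*\right)\le B.\] Moreover, if this inequality holds, then $(f,x_1^*,\dots,x_n^* )$ is feasible for the step function $f$ defined by $f(x)=0$ for $0\le x<x_1^*$, and for $x_j^*\le x<x_{j+1}^*$ ($1\le j\le n$, with $x_{n+1}^*=+\infty$) \[f(x)=C\left(\sum_{t=1}^{j-1}\left(\frac{x_t^*}{q_t}-\frac{x_t^*}{q_{t+1}}\right)+\frac{x_j^*}{q_j}\right).\]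
   Context: There are $n$ agents with types $0<q_1\le q_2\le\cdots\le q_n$, a cost constant $C>0$ and a budget $B>0$. A reward function is a map $f:[0,\infty)\to[0,\infty)$; agent $i$'s utility for producing quality $x$ is $u_i(x)=f(x)-xC/q_i$. A tuple $(f,x_1^*,\dots,x_n^* )$ is a feasible solution of the reward-design problem if for each $i$: $0\le x_i^*\le q_i$ and $u_i(x_i^* )\ge u_i(x)$ for all $x\in[0,q_i]$, and moreover $\sum_{i=1}^n f(x_i^* )\le B$. *)

theory Defs
  imports "HOL-Analysis.Analysis"
begin

text \<open>A reward function is a map [0,oo) -> [0,oo), modelled as f :: real => real
  whose values on [0,oo) are nonnegative (values on negative reals are irrelevant).\<close>

definition reward_fun :: "(real \<Rightarrow> real) \<Rightarrow> bool" where
  "reward_fun f \<longleftrightarrow> (\<forall>y\<ge>0. f y \<ge> 0)"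

definition utility :: "real \<Rightarrow> (real \<Rightarrow> real) \<Rightarrow> real \<Rightarrow> real \<Rightarrow> real" where
  "utility C f qi y = f y - y * C / qi"

definition feasible ::
  "nat \<Rightarrow> (nat \<Rightarrow> real) \<Rightarrow> real \<Rightarrow> real \<Rightarrow> (real \<Rightarrow> real) \<Rightarrow> (nat \<Rightarrow> real) \<Rightarrow> bool" where
  "feasible n q C B f xs \<longleftrightarrow>
     reward_fun f \<and>
     (\<forall>i\<in>{1..n}. 0 \<le> xs i \<and> xs i \<le> q i \<and>
        (\<forall>y\<in>{0..q i}. utility C f (q i) (xs i) \<ge> utility C f (q i) y)) \<and>
     (\<Sum>i=1..n. f (xs i)) \<le> B"

text \<open>The step function of the lemma: 0 below x_1; on [x_j, x_{j+1}) (x_{n+1} = +oo)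
  it takes the value C(sum_{t<j}(x_t/q_t - x_t/q_{t+1}) + x_j/q_j). For y \<ge> x_1 the
  relevant j is the largest index with x_j \<le> y (intervals for tied x_j are empty).\<close>

definition step_value :: "(nat \<Rightarrow> real) \<Rightarrow> real \<Rightarrow> (nat \<Rightarrow> real) \<Rightarrow> nat \<Rightarrow> real" where
  "step_value q C xs j = C * ((\<Sum>t=1..<j. xs t / q t - xs t / q (t+1)) + xs j / q j)"

definition step_fun :: "nat \<Rightarrow> (nat \<Rightarrow> real) \<Rightarrow> real \<Rightarrow> (nat \<Rightarrow> real) \<Rightarrow> real \<Rightarrow> real" where
  "step_fun n q C xs y =
     (if y < xs 1 then 0
      else step_value q C xs (GREATEST j. j \<in> {1..n} \<and> xs j \<le> y))"

end

theory Submission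
  imports Defs
begin

text \<open>Write \<open>S\<^sub>j\<close> for \<open>step_value q C xs j\<close>, so \<open>S\<^sub>1 = C x\<^sub>1/q\<^sub>1\<close> and
  \<open>S\<^sub>j\<^sub>+\<^sub>1 = S\<^sub>j + C (x\<^sub>j\<^sub>+\<^sub>1 - x\<^sub>j)/q\<^sub>j\<^sub>+\<^sub>1\<close>, and \<open>\<Sum>\<^sub>j S\<^sub>j\<close> is the left-hand side of the budget
  inequality. Necessity: in any feasible solution agent 1 does not prefer producing 0 (where the
  reward is nonnegative), and agent \<open>j+1\<close> does not prefer imitating agent \<open>j\<close>; by induction
  \<open>f(x\<^sub>j) \<ge> S\<^sub>j\<close>, so the budget is at least \<open>\<Sum>\<^sub>j S\<^sub>j\<close>. Sufficiency: the step function pays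
  exactly \<open>S\<^sub>j\<close> at \<open>x\<^sub>j\<close>; since the types increase, it rises by at most \<open>C/q\<^sub>i\<close> per unit of
  quality above \<open>x\<^sub>i\<close> and falls by at least \<open>C/q\<^sub>i\<close> per unit below \<open>x\<^sub>i\<close>. As \<open>C/q\<^sub>i\<close> is the
  marginal cost of agent \<open>i\<close>, no deviation pays.\<close>

lemma step_value_1: "step_value q C xs 1 = C * xs 1 / q 1"
  unfolding step_value_def by simp

lemma step_value_Suc:
  assumes "1 \<le> j"
  shows "step_value q C xs (Suc j) = step_value q C xs j + C * (xs (Suc j) - xs j) / q (Suc j)"
proof -
  have "{1..<Suc j} = insert j {1..<j}" using assms by auto
  then show ?thesis
    unfolding step_value_def by (simp add: algebra_simps add_divide_distrib diff_divide_distrib)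
qed

lemma sum_step_value:
  assumes "1 \<le> n"
  shows "(\<Sum>i=1..n. step_value q C xs i) =
     C * (xs n / q n + (\<Sum>i=1..<n. (real (n - i) * (1 / q i - 1 / q (i+1)) + 1 / q i) * xs i))"
  using assms
proof (induction n rule: nat_induct_at_least)
  case base
  then show ?case by (simp add: step_value_def)
next
  case (Suc n)
  define W where "W m = (\<Sum>i=1..<m. (real (m - i) * (1 / q i - 1 / q (i+1)) + 1 / q i) * xs i)" for m
  define D where "D = (\<Sum>i=1..<Suc n. (1 / q i - 1 / q (i+1)) * xs i)"
  have "W (Suc n) = (\<Sum>i=1..<Suc n. (real (n - i) * (1 / q i - 1 / q (i+1)) + 1 / q i) * xs i
      + (1 / q i - 1 / q (i+1)) * xs i)"
    unfolding W_def by (rule sum.cong) (auto simp: Suc_diff_le algebra_simps simp del: of_nat_diff)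
  also have "\<dots> = W n + xs n / q n + D"
    using Suc.hyps unfolding W_def D_def by (simp add: sum.distrib)
  finally have W_Suc: "W (Suc n) = W n + xs n / q n + D" .
  have "step_value q C xs (Suc n) = C * (D + xs (Suc n) / q (Suc n))"
    unfolding step_value_def D_def by (simp add: algebra_simps)
  then have "(\<Sum>i=1..Suc n. step_value q C xs i) = C * (xs n / q n + W n) + C * (D + xs (Suc n) / q (Suc n))"
    using Suc.IH unfolding W_def by simp
  also have "\<dots> = C * (xs (Suc n) / q (Suc n) + W (Suc n))"
    unfolding W_Suc by (simp add: algebra_simps)
  finally show ?case unfolding W_def .
qed

lemma feasible_step_value_le:
  assumes feas: "feasible n q C B f xs"
    and xs_mono: "\<And>i. i \<in> {1..<n} \<Longrightarrow> xs i \<le> xs (i+1)"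
    and i: "i \<in> {1..n}"
  shows "step_value q C xs i \<le> f (xs i)"
proof -
  have ic: "f y - y * C / q k \<le> f (xs k) - xs k * C / q k" if "k \<in> {1..n}" "y \<in> {0..q k}" for k y
    using feas that unfolding feasible_def utility_def by blast
  from i have "1 \<le> i" "i \<le> n" by auto
  then show ?thesis
  proof (induction i rule: dec_induct)
    case base
    have "0 \<le> xs 1 \<and> xs 1 \<le> q 1"
      using feas base unfolding feasible_def by auto
    then have "f 0 \<le> f (xs 1) - xs 1 * C / q 1"
      using ic[of 1 0] base by simp
    moreover have "0 \<le> f 0" using feas unfolding feasible_def reward_fun_def by auto
    ultimately show ?case unfolding step_value_1 by (simp add: mult.commute)
  next
    case (step i)
    have "xs i \<le> xs (Suc i)" using xs_mono[of i] step by simp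
    moreover have "0 \<le> xs i" "xs (Suc i) \<le> q (Suc i)"
      using feas step unfolding feasible_def by auto
    ultimately have "xs i \<in> {0..q (Suc i)}" by simp
    then have "f (xs i) - xs i * C / q (Suc i) \<le> f (xs (Suc i)) - xs (Suc i) * C / q (Suc i)"
      using ic step by simp
    with step show ?case
      by (simp add: step_value_Suc diff_divide_distrib algebra_simps)
  qed
qed

lemma feasible_sum_step_value_le:
  assumes "feasible n q C B f xs" and "\<And>i. i \<in> {1..<n} \<Longrightarrow> xs i \<le> xs (i+1)"
  shows "(\<Sum>i=1..n. step_value q C xs i) \<le> B"
proof -
  have "(\<Sum>i=1..n. step_value q C xs i) \<le> (\<Sum>i=1..n. f (xs i))"
    by (intro sum_mono feasible_step_value_le[of n q C B f xs]) (use assms in auto)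
  also have "\<dots> \<le> B" using assms(1) unfolding feasible_def by blast
  finally show ?thesis .
qed

lemma step_fun_greatest_index:
  assumes "1 \<le> n" and "xs 1 \<le> y"
  obtains g where "g \<in> {1..n}" "xs g \<le> y" "\<And>k. k \<in> {1..n} \<Longrightarrow> xs k \<le> y \<Longrightarrow> k \<le> g"
    and "step_fun n q C xs y = step_value q C xs g"
proof
  let ?P = "\<lambda>j. j \<in> {1..n} \<and> xs j \<le> y"
  have P1: "?P 1" using assms by simp
  have bound: "\<And>j. ?P j \<Longrightarrow> j \<le> n" by simp
  show "(GREATEST j. ?P j) \<in> {1..n}" "xs (GREATEST j. ?P j) \<le> y"
    using GreatestI_nat[of ?P, OF P1 bound] by auto
  show "k \<le> (GREATEST j. ?P j)" if "k \<in> {1..n}" "xs k \<le> y" for k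
    using Greatest_le_nat[of ?P k, OF _ bound] that by blast
  show "step_fun n q C xs y = step_value q C xs (GREATEST j. ?P j)"
    using assms(2) unfolding step_fun_def by simp
qed

locale sorted_profile =
  fixes n :: nat and q xs :: "nat \<Rightarrow> real" and C :: real
  assumes n_ge_1: "1 \<le> n"
    and q_pos: "\<And>i. i \<in> {1..n} \<Longrightarrow> 0 < q i"
    and q_mono: "\<And>i. i \<in> {1..<n} \<Longrightarrow> q i \<le> q (i+1)"
    and C_nonneg: "0 \<le> C"
    and xs_bounds: "\<And>i. i \<in> {1..n} \<Longrightarrow> 0 \<le> xs i \<and> xs i \<le> q i"
    and xs_mono: "\<And>i. i \<in> {1..<n} \<Longrightarrow> xs i \<le> xs (i+1)"
begin

abbreviation S :: "nat \<Rightarrow> real" where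
  "S \<equiv> step_value q C xs"

abbreviation F :: "real \<Rightarrow> real" where
  "F \<equiv> step_fun n q C xs"

lemma q_mono_le:
  assumes "1 \<le> i" "i \<le> j" "j \<le> n"
  shows "q i \<le> q j"
  using lift_Suc_mono_le_ivl[of "{1..<n}" q i j] q_mono assms by auto

lemma xs_mono_le:
  assumes "1 \<le> i" "i \<le> j" "j \<le> n"
  shows "xs i \<le> xs j"
  using lift_Suc_mono_le_ivl[of "{1..<n}" xs i j] xs_mono assms by auto

lemma step_value_diff:
  assumes "1 \<le> i" "i \<le> j"
  shows "S j - S i = (\<Sum>t=i..<j. C * (xs (Suc t) - xs t) / q (Suc t))"
  using assms(2)
proof (induction j rule: dec_induct)
  case (step j)
  then show ?case using assms(1) by (simp add: step_value_Suc)
qed simp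

lemma step_value_diff_le:
  assumes "1 \<le> i" "i \<le> j" "j \<le> n"
  shows "S j - S i \<le> C * (xs j - xs i) / q i"
proof -
  have "S j - S i \<le> (\<Sum>t=i..<j. C * (xs (Suc t) - xs t) / q i)"
    unfolding step_value_diff[OF assms(1,2)]
  proof (rule sum_mono)
    fix t assume "t \<in> {i..<j}"
    with assms show "C * (xs (Suc t) - xs t) / q (Suc t) \<le> C * (xs (Suc t) - xs t) / q i"
      using q_pos[of i] q_mono_le[of i "Suc t"] xs_mono[of t] C_nonneg
      by (intro divide_left_mono) auto
  qed
  also have "\<dots> = C * (xs j - xs i) / q i"
    using assms(2) by (simp add: sum_divide_distrib[symmetric] sum_distrib_left[symmetric] sum_Suc_diff')
  finally show ?thesis .
qed

lemma step_value_diff_ge: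
  assumes "1 \<le> i" "i \<le> j" "j \<le> n"
  shows "C * (xs j - xs i) / q j \<le> S j - S i"
proof -
  have "C * (xs j - xs i) / q j = (\<Sum>t=i..<j. C * (xs (Suc t) - xs t) / q j)"
    using assms(2) by (simp add: sum_divide_distrib[symmetric] sum_distrib_left[symmetric] sum_Suc_diff')
  also have "\<dots> \<le> S j - S i"
    unfolding step_value_diff[OF assms(1,2)]
  proof (rule sum_mono)
    fix t assume "t \<in> {i..<j}"
    with assms show "C * (xs (Suc t) - xs t) / q j \<le> C * (xs (Suc t) - xs t) / q (Suc t)"
      using q_pos[of "Suc t"] q_mono_le[of "Suc t" j] xs_mono[of t] C_nonneg
      by (intro divide_left_mono) auto
  qed
  finally show ?thesis .
qed

lemma step_value_ge:
  assumes "i \<in> {1..n}"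
  shows "C * xs i / q i \<le> S i"
proof -
  have "0 \<le> xs t / q t - xs t / q (t+1)" if "t \<in> {1..<i}" for t
    using that assms xs_bounds[of t] q_pos[of t] q_mono[of t]
    by (auto intro!: divide_left_mono)
  then have "0 \<le> (\<Sum>t=1..<i. xs t / q t - xs t / q (t+1))"
    by (rule sum_nonneg)
  then show ?thesis
    unfolding step_value_def using C_nonneg by (simp add: algebra_simps)
qed

lemma step_fun_xs:
  assumes "i \<in> {1..n}"
  shows "F (xs i) = S i"
proof -
  have "xs 1 \<le> xs i" using assms xs_mono_le[of 1 i] by auto
  then obtain g where g: "g \<in> {1..n}" "xs g \<le> xs i"
    and greatest: "\<And>k. k \<in> {1..n} \<Longrightarrow> xs k \<le> xs i \<Longrightarrow> k \<le> g" and F_xs: "F (xs i) = S g"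
    using step_fun_greatest_index[where q = q and C = C, OF n_ge_1] by blast
  have "i \<le> g" using greatest assms by simp
  moreover have "xs g = xs i" using g xs_mono_le[of i g] assms \<open>i \<le> g\<close> by auto
  ultimately show ?thesis
    using F_xs step_value_diff_le[of i g] step_value_diff_ge[of i g] g assms by auto
qed

lemma reward_fun_step_fun: "reward_fun F"
  unfolding reward_fun_def
proof (intro allI impI)
  fix y :: real
  show "0 \<le> F y"
  proof (cases "y < xs 1")
    case False
    then have "xs 1 \<le> y" by simp
    then obtain g where g: "g \<in> {1..n}" "xs g \<le> y"
      and "\<And>k. k \<in> {1..n} \<Longrightarrow> xs k \<le> y \<Longrightarrow> k \<le> g" and "F y = S g"
      using step_fun_greatest_index[where q = q and C = C, OF n_ge_1] by blast
    have "0 \<le> C * xs g / q g" using C_nonneg xs_bounds[OF g(1)] q_pos[OF g(1)] by simp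
    then show ?thesis
      using step_value_ge[OF g(1)] \<open>F y = S g\<close> by linarith
  qed (simp add: step_fun_def)
qed

lemma step_fun_diff_le:
  assumes i: "i \<in> {1..n}" and "0 \<le> y"
  shows "F y - S i \<le> C * (y - xs i) / q i"
proof (cases "y < xs 1")
  case True
  have "0 \<le> C * y / q i" using q_pos[OF i] C_nonneg \<open>0 \<le> y\<close> by simp
  with True show ?thesis
    using step_value_ge[OF i] by (simp add: step_fun_def diff_divide_distrib right_diff_distrib)
next
  case False
  then have "xs 1 \<le> y" by simp
  then obtain g where g: "g \<in> {1..n}" "xs g \<le> y"
    and "\<And>k. k \<in> {1..n} \<Longrightarrow> xs k \<le> y \<Longrightarrow> k \<le> g" and F_y: "F y = S g"
    using step_fun_greatest_index[where q = q and C = C, OF n_ge_1] by blast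
  have scaled_mono: "C * u / q i \<le> C * v / q i" if "u \<le> v" for u v
    using that q_pos[OF i] C_nonneg by (intro divide_right_mono mult_left_mono) auto
  show ?thesis
  proof (cases "i \<le> g")
    case True
    then show ?thesis
      using F_y step_value_diff_le[of i g] scaled_mono[of "xs g - xs i" "y - xs i"] g i by auto
  next
    case False
    then have "C * (xs i - xs g) / q i \<le> S i - S g"
      using step_value_diff_ge[of g i] g i by auto
    moreover have "C * (xs i - y) / q i \<le> C * (xs i - xs g) / q i"
      using scaled_mono g(2) by simp
    ultimately show ?thesis
      using F_y by (simp add: diff_divide_distrib right_diff_distrib)
  qed
qed

lemma utility_step_fun_le:
  assumes "i \<in> {1..n}" and "0 \<le> y"
  shows "utility C F (q i) y \<le> utility C F (q i) (xs i)"
  using step_fun_diff_le[OF assms] step_fun_xs[OF assms(1)]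
  by (simp add: utility_def diff_divide_distrib right_diff_distrib mult.commute)

lemma feasible_step_fun:
  assumes "(\<Sum>i=1..n. S i) \<le> B"
  shows "feasible n q C B F xs"
proof -
  have "(\<Sum>i=1..n. F (xs i)) = (\<Sum>i=1..n. S i)"
    by (rule sum.cong) (simp_all add: step_fun_xs)
  then show ?thesis
    unfolding feasible_def
    using assms reward_fun_step_fun utility_step_fun_le xs_bounds by auto
qed

end

theorem lemma2:
  fixes n :: nat and q xs :: "nat \<Rightarrow> real" and C B :: real
  assumes n1: "n \<ge> 1"
    and qpos: "\<And>i. i \<in> {1..n} \<Longrightarrow> 0 < q i"
    and qmono: "\<And>i. i \<in> {1..<n} \<Longrightarrow> q i \<le> q (i+1)"
    and Cpos: "C > 0" and Bpos: "B > 0"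
    and xbd: "\<And>i. i \<in> {1..n} \<Longrightarrow> 0 \<le> xs i \<and> xs i \<le> q i"
    and xmono: "\<And>i. i \<in> {1..<n} \<Longrightarrow> xs i \<le> xs (i+1)"
  shows "((\<exists>f. feasible n q C B f xs) \<longleftrightarrow>
           C * (xs n / q n + (\<Sum>i=1..<n. (real (n - i) * (1 / q i - 1 / q (i+1)) + 1 / q i) * xs i)) \<le> B)
       \<and> (C * (xs n / q n + (\<Sum>i=1..<n. (real (n - i) * (1 / q i - 1 / q (i+1)) + 1 / q i) * xs i)) \<le> B
            \<longrightarrow> feasible n q C B (step_fun n q C xs) xs)"
proof -
  interpret sorted_profile n q xs C
    using n1 qpos qmono Cpos xbd xmono by unfold_locales auto
  show ?thesis
    unfolding sum_step_value[OF n1, symmetric]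
  proof (intro conjI impI iffI)
    assume "\<exists>f. feasible n q C B f xs"
    then obtain g where "feasible n q C B g xs" ..
    from this xmono show "(\<Sum>i=1..n. S i) \<le> B"
      by (rule feasible_sum_step_value_le)
  next
    assume "(\<Sum>i=1..n. S i) \<le> B"
    then show "feasible n q C B (step_fun n q C xs) xs"
      by (rule feasible_step_fun)
    then show "\<exists>f. feasible n q C B f xs" by blast
  qed
qed

end
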